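(* Let $v_1,v_2\in L_2(0,1)$ be complex-valued and $\alpha\in[0,2\pi)$. Let $A(v_1,v_2,\alpha)$ be the operator in $L_2(0,1)$ acting by $$A(v_1,v_2,\alpha)\psi(x)=i\psi'(x)+v_1(x)\Big[\psi(0)-\tfrac{i}{2}\langle\psi,v_1\rangle\Big]+v_2(x)\Big[\psi(1)+\tfrac{i}{2}\langle\psi,v_2\rangle\Big]$$ on the domain of all $\psi\in W_2^1(0,1)$ satisfying $\psi(1)+i\langle\psi,v_2\rangle=e^{i\alpha}[\psi(0)-i\langle\psi,v_1\rangle]$. Then $A(v_1,v_2,\alpha)$ is symmetric in $L_2(0,1)$.
   Context: $\langle f,g\rangle=\int_0^1 f\bar g\,dx$; $W_2^1(0,1)$ is the Sobolev space. *)

theory Defs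
  imports "HOL-Analysis.Analysis"
begin

definition L2 :: "(real \<Rightarrow> complex) \<Rightarrow> bool" where
  "L2 f \<longleftrightarrow> (\<lambda>x. indicator {0..1} x *\<^sub>R f x) \<in> borel_measurable lborel
            \<and> set_integrable lborel {0..1} (\<lambda>x. (cmod (f x))^2)"

definition ip :: "(real \<Rightarrow> complex) \<Rightarrow> (real \<Rightarrow> complex) \<Rightarrow> complex" where
  "ip f g = (LINT x:{0..1}|lborel. f x * cnj (g x))"

text \<open>psi in W_2^1(0,1) with (weak) derivative dpsi: psi is the (absolutely continuous)
  primitive of an L_2 function dpsi on [0,1].\<close>
definition W21 :: "(real \<Rightarrow> complex) \<Rightarrow> (real \<Rightarrow> complex) \<Rightarrow> bool" where
  "W21 psi dpsi \<longleftrightarrow> L2 dpsi \<and>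
     (\<forall>x\<in>{0..1}. psi x = psi 0 + (LINT t:{0..x}|lborel. dpsi t))"

definition domA :: "(real \<Rightarrow> complex) \<Rightarrow> (real \<Rightarrow> complex) \<Rightarrow> real
                     \<Rightarrow> (real \<Rightarrow> complex) \<Rightarrow> (real \<Rightarrow> complex) \<Rightarrow> bool" where
  "domA v1 v2 \<alpha> psi dpsi \<longleftrightarrow> W21 psi dpsi \<and>
     psi 1 + \<i> * ip psi v2 = exp (\<i> * complex_of_real \<alpha>) * (psi 0 - \<i> * ip psi v1)"

definition opA :: "(real \<Rightarrow> complex) \<Rightarrow> (real \<Rightarrow> complex)
                     \<Rightarrow> (real \<Rightarrow> complex) \<Rightarrow> (real \<Rightarrow> complex) \<Rightarrow> real \<Rightarrow> complex" where
  "opA v1 v2 psi dpsi x = \<i> * dpsi x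
      + v1 x * (psi 0 - (\<i> / 2) * ip psi v1)
      + v2 x * (psi 1 + (\<i> / 2) * ip psi v2)"

end

theory Submission
  imports Defs
begin

(* Symmetry: by integration by parts (Fubini on the triangles t <= x and x < t),
   <A psi, phi> - <psi, A phi> reduces to i (w conj w' - u conj u'), where
   u = psi(0) - i<psi,v1>, w = psi(1) + i<psi,v2> and u', w' are the same expressions for phi.
   The boundary condition says w = e^{i alpha} u and w' = e^{i alpha} u', so this vanishes.
   Density: truncate an L2 function to a bounded one, smooth it by Steklov averages
   (Lebesgue differentiation and dominated convergence) to reach W_2^1, and finally restore the
   boundary condition by adding a multiple of x^n; as n grows, x^n has vanishing L2 norm and
   inner products with v1, v2, while its defect in the boundary condition tends to 1. *)

section \<open>Square-integrable functions on the unit interval\<close>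

abbreviation lborel_01 :: "real measure" where
  "lborel_01 \<equiv> restrict_space lborel {0..1}"

definition zero_ext :: "(real \<Rightarrow> 'a::real_vector) \<Rightarrow> real \<Rightarrow> 'a" where
  "zero_ext f x = indicator {0..1} x *\<^sub>R f x"

lemma borel_measurable_cnj [measurable]:
  "f \<in> borel_measurable M \<Longrightarrow> (\<lambda>x. cnj (f x)) \<in> borel_measurable M"
  by (rule borel_measurable_continuous_on[of cnj]) (auto intro: continuous_on_cnj)

lemma finite_measure_lborel_01: "finite_measure lborel_01"
  by (intro finite_measureI) (simp add: emeasure_restrict_space)

lemma integral_lborel_01:
  fixes f :: "real \<Rightarrow> 'a::{banach, second_countable_topology}"
  shows "integral\<^sup>L lborel_01 f = integral\<^sup>L lborel (zero_ext f)"
  unfolding zero_ext_def by (simp add: integral_restrict_space)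

lemma integrable_lborel_01_iff:
  fixes f :: "real \<Rightarrow> 'a::{banach, second_countable_topology}"
  shows "integrable lborel_01 f \<longleftrightarrow> integrable lborel (zero_ext f)"
  unfolding zero_ext_def by (simp add: set_integrable_eq[symmetric] set_integrable_def)

lemma set_integral_01:
  fixes f :: "real \<Rightarrow> 'a::{banach, second_countable_topology}"
  shows "(LINT x:{0..1}|lborel. f x) = integral\<^sup>L lborel_01 f"
  unfolding set_lebesgue_integral_def integral_lborel_01 zero_ext_def ..

lemma L2_iff:
  "L2 f \<longleftrightarrow> f \<in> borel_measurable lborel_01 \<and> integrable lborel_01 (\<lambda>x. (cmod (f x))^2)"
  unfolding L2_def by (simp add: borel_measurable_restrict_space_iff set_integrable_eq)

lemma ip_eq_integral: "ip f g = integral\<^sup>L lborel_01 (\<lambda>x. f x * cnj (g x))"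
  unfolding ip_def set_integral_01 ..

lemma norm_mult_le_sum_squares:
  fixes a b :: "'a::real_normed_div_algebra"
  shows "norm (a * b) \<le> (norm a)^2 + (norm b)^2"
proof -
  have "0 \<le> (norm a - norm b)^2" by simp
  then have "2 * (norm a * norm b) \<le> (norm a)^2 + (norm b)^2"
    by (simp add: power2_eq_square algebra_simps)
  moreover have "0 \<le> norm a * norm b" by simp
  ultimately have "norm a * norm b \<le> (norm a)^2 + (norm b)^2" by linarith
  then show ?thesis by (simp add: norm_mult)
qed

lemma norm_add_squared_le:
  fixes a b :: "'a::real_normed_vector"
  shows "(norm (a + b))^2 \<le> 2 * (norm a)^2 + 2 * (norm b)^2"
proof -
  have "(norm (a + b))^2 \<le> (norm a + norm b)^2"
    by (intro power_mono norm_triangle_ineq) simp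
  also have "\<dots> \<le> 2 * (norm a)^2 + 2 * (norm b)^2"
    using sum_squares_ge_zero[of "norm a - norm b" 0] by (simp add: power2_eq_square algebra_simps)
  finally show ?thesis .
qed

lemma L2_bounded:
  assumes "f \<in> borel_measurable lborel" and "\<And>x. x \<in> {0..1} \<Longrightarrow> cmod (f x) \<le> C"
  shows "L2 f"
proof -
  interpret finite_measure lborel_01 by (rule finite_measure_lborel_01)
  have meas: "f \<in> borel_measurable lborel_01"
    using assms(1) by (rule measurable_restrict_space1)
  have "AE x in lborel_01. norm ((cmod (f x))^2) \<le> C^2"
    using assms(2) by (intro AE_I2) (auto simp: space_restrict_space intro: power_mono)
  moreover have "(\<lambda>x. (cmod (f x))^2) \<in> borel_measurable lborel_01"
    using meas by measurable
  ultimately have "integrable lborel_01 (\<lambda>x. (cmod (f x))^2)"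
    by (rule integrable_const_bound)
  with meas show ?thesis unfolding L2_iff ..
qed

lemma L2_continuous_on: "continuous_on {0..1} f \<Longrightarrow> L2 f"
  unfolding L2_def
  by (simp add: borel_measurable_continuous_on_indicator borel_integrable_atLeastAtMost'
      continuous_on_norm continuous_on_power)

lemma L2_integrable:
  assumes "L2 f"
  shows "integrable lborel_01 f"
proof -
  interpret finite_measure lborel_01 by (rule finite_measure_lborel_01)
  from assms have meas: "f \<in> borel_measurable lborel_01"
    and sq: "integrable lborel_01 (\<lambda>x. (cmod (f x))^2)"
    unfolding L2_iff by auto
  have "(\<lambda>x. cmod (f x)) \<in> borel_measurable lborel_01"
    using meas by measurable
  then have "integrable lborel_01 (\<lambda>x. cmod (f x))"
    using sq by (rule square_integrable_imp_integrable)
  then show ?thesis by (rule integrable_norm_cancel[OF _ meas])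
qed

lemma L2_integrable_mult_cnj:
  assumes "L2 f" and "L2 g"
  shows "integrable lborel_01 (\<lambda>x. f x * cnj (g x))"
proof (rule Bochner_Integration.integrable_bound)
  show "integrable lborel_01 (\<lambda>x. (cmod (f x))^2 + (cmod (g x))^2)"
    using assms unfolding L2_iff by auto
  have [measurable]: "f \<in> borel_measurable lborel_01" "g \<in> borel_measurable lborel_01"
    using assms unfolding L2_iff by auto
  show "(\<lambda>x. f x * cnj (g x)) \<in> borel_measurable lborel_01"
    by measurable
  show "AE x in lborel_01. norm (f x * cnj (g x)) \<le> norm ((cmod (f x))^2 + (cmod (g x))^2)"
    using norm_mult_le_sum_squares[of "f x" "cnj (g x)" for x] by (intro AE_I2) simp
qed

lemma L2_add:
  assumes "L2 f" and "L2 g"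
  shows "L2 (\<lambda>x. f x + g x)"
proof -
  have meas: "(\<lambda>x. f x + g x) \<in> borel_measurable lborel_01"
    using assms unfolding L2_iff by auto
  have "integrable lborel_01 (\<lambda>x. (cmod (f x + g x))^2)"
  proof (rule Bochner_Integration.integrable_bound)
    show "integrable lborel_01 (\<lambda>x. 2 * (cmod (f x))^2 + 2 * (cmod (g x))^2)"
      using assms unfolding L2_iff by auto
    show "(\<lambda>x. (cmod (f x + g x))^2) \<in> borel_measurable lborel_01"
      using meas by measurable
    show "AE x in lborel_01. norm ((cmod (f x + g x))^2) \<le> norm (2 * (cmod (f x))^2 + 2 * (cmod (g x))^2)"
      using norm_add_squared_le[of "f x" "g x" for x] by (intro AE_I2) simp
  qed
  with meas show ?thesis unfolding L2_iff ..
qed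

lemma L2_mult: "L2 f \<Longrightarrow> L2 (\<lambda>x. c * f x)"
  unfolding L2_iff by (auto simp: norm_mult power_mult_distrib)

lemma L2_diff: "L2 f \<Longrightarrow> L2 g \<Longrightarrow> L2 (\<lambda>x. f x - g x)"
  using L2_add[OF _ L2_mult[of g "-1"]] by simp

lemma cnj_ip [simp]: "cnj (ip f g) = ip g f"
proof -
  have "cnj (ip f g) = integral\<^sup>L lborel_01 (\<lambda>x. cnj (f x * cnj (g x)))"
    unfolding ip_eq_integral by (rule Bochner_Integration.integral_cnj[symmetric])
  then show ?thesis by (simp add: ip_eq_integral mult.commute)
qed

lemma ip_add_left:
  assumes "L2 f" and "L2 g" and "L2 h"
  shows "ip (\<lambda>x. f x + g x) h = ip f h + ip g h"
  unfolding ip_eq_integral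
  using L2_integrable_mult_cnj[OF assms(1,3)] L2_integrable_mult_cnj[OF assms(2,3)]
  by (simp add: distrib_right)

lemma ip_mult_left: "ip (\<lambda>x. c * f x) h = c * ip f h"
  unfolding ip_eq_integral by (simp add: mult.assoc)

definition L2_sqdist :: "(real \<Rightarrow> complex) \<Rightarrow> (real \<Rightarrow> complex) \<Rightarrow> real" where
  "L2_sqdist f g = (LINT x:{0..1}|lborel. (cmod (f x - g x))^2)"

lemma L2_sqdist_eq_integral: "L2_sqdist f g = integral\<^sup>L lborel_01 (\<lambda>x. (cmod (f x - g x))^2)"
  unfolding L2_sqdist_def set_integral_01 ..

lemma L2_sqdist_triangle:
  assumes "L2 f" and "L2 g" and "L2 h"
  shows "L2_sqdist f h \<le> 2 * L2_sqdist f g + 2 * L2_sqdist g h"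
proof -
  have int: "integrable lborel_01 (\<lambda>x. (cmod (u x - v x))^2)" if "L2 u" "L2 v" for u v
    using L2_diff[OF that] unfolding L2_iff by blast
  note fg = int[OF assms(1,2)] and gh = int[OF assms(2,3)]
  have "(cmod (f x - h x))^2 \<le> 2 * (cmod (f x - g x))^2 + 2 * (cmod (g x - h x))^2" for x
    using norm_add_squared_le[of "f x - g x" "g x - h x"] by simp
  then have "L2_sqdist f h \<le> integral\<^sup>L lborel_01
               (\<lambda>x. 2 * (cmod (f x - g x))^2 + 2 * (cmod (g x - h x))^2)"
    unfolding L2_sqdist_eq_integral using int[OF assms(1,3)] fg gh
    by (intro integral_mono) auto
  also have "\<dots> = 2 * L2_sqdist f g + 2 * L2_sqdist g h"
    unfolding L2_sqdist_eq_integral using fg gh by simp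
  finally show ?thesis .
qed

lemma L2_sqdist_tendsto_0:
  assumes "L2 f" and "\<And>k. L2 (g k)" and "integrable lborel_01 w"
    and "AE x in lborel_01. (\<lambda>k. g k x) \<longlonglongrightarrow> f x"
    and "\<And>k. AE x in lborel_01. (cmod (f x - g k x))^2 \<le> w x"
  shows "(\<lambda>k. L2_sqdist f (g k)) \<longlonglongrightarrow> 0"
proof -
  have "(\<lambda>k. integral\<^sup>L lborel_01 (\<lambda>x. (cmod (f x - g k x))^2))
          \<longlonglongrightarrow> integral\<^sup>L lborel_01 (\<lambda>x. 0)"
  proof (rule integral_dominated_convergence[OF _ _ assms(3)])
    show "(\<lambda>x. (cmod (f x - g k x))^2) \<in> borel_measurable lborel_01" for k
    proof -
      have [measurable]: "(\<lambda>x. f x - g k x) \<in> borel_measurable lborel_01"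
        using L2_diff[OF assms(1,2)] unfolding L2_iff by blast
      show ?thesis by measurable
    qed
    show "AE x in lborel_01. (\<lambda>k. (cmod (f x - g k x))^2) \<longlonglongrightarrow> 0"
      using assms(4)
    proof eventually_elim
      case (elim x)
      then have "(\<lambda>k. (cmod (f x - g k x))^2) \<longlonglongrightarrow> (cmod (f x - f x))^2"
        by (intro tendsto_intros)
      then show ?case by simp
    qed
    show "AE x in lborel_01. norm ((cmod (f x - g k x))^2) \<le> w x" for k
      using assms(5)[of k] by simp
  qed simp
  then show ?thesis by (simp add: L2_sqdist_eq_integral)
qed

section \<open>Sobolev functions on the unit interval\<close>

lemma L2_integrable_on:
  assumes "L2 f"
  shows "f integrable_on {0..1}"
proof -
  have "set_integrable lborel {0..1} f"
    using L2_integrable[OF assms] by (simp add: set_integrable_eq)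
  then show ?thesis by (rule set_borel_integral_eq_integral(1))
qed

lemma L2_set_integral_eq_integral:
  assumes "L2 f" and "x \<in> {0..1}"
  shows "(LINT t:{0..x}|lborel. f t) = integral {0..x} f"
proof -
  have "set_integrable lborel {0..1} f"
    using L2_integrable[OF assms(1)] by (simp add: set_integrable_eq)
  then have "set_integrable lborel {0..x} f"
    by (rule set_integrable_subset) (use assms(2) in auto)
  then show ?thesis by (rule set_borel_integral_eq_integral(2))
qed

lemma W21_iff_integral:
  "W21 psi a \<longleftrightarrow> L2 a \<and> (\<forall>x\<in>{0..1}. psi x = psi 0 + integral {0..x} a)"
proof (cases "L2 a")
  case True
  then show ?thesis unfolding W21_def by (simp add: L2_set_integral_eq_integral)
qed (simp add: W21_def)

lemma W21_L2_deriv: "W21 psi a \<Longrightarrow> L2 a"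
  unfolding W21_def by blast

lemma W21_eq_integral: "W21 psi a \<Longrightarrow> x \<in> {0..1} \<Longrightarrow> psi x = psi 0 + integral {0..x} a"
  unfolding W21_iff_integral by blast

lemma W21_continuous_on:
  assumes "W21 psi a"
  shows "continuous_on {0..1} psi"
proof -
  have "continuous_on {0..1} (\<lambda>x. psi 0 + integral {0..x} a)"
    using L2_integrable_on[OF W21_L2_deriv[OF assms]]
    by (intro continuous_intros indefinite_integral_continuous_1)
  then show ?thesis
    by (rule continuous_on_eq) (erule W21_eq_integral[OF assms, symmetric])
qed

lemma W21_L2: "W21 psi a \<Longrightarrow> L2 psi"
  by (rule L2_continuous_on[OF W21_continuous_on])

lemma W21_add_scaled:
  assumes "W21 f a" and "W21 g b"
  shows "W21 (\<lambda>x. f x + c * g x) (\<lambda>x. a x + c * b x)"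
  unfolding W21_iff_integral
proof (intro conjI ballI)
  have a: "L2 a" and b: "L2 b"
    using assms by (simp_all add: W21_L2_deriv)
  then show "L2 (\<lambda>x. a x + c * b x)" by (intro L2_add L2_mult)
  fix x :: real assume x: "x \<in> {0..1}"
  then have sub: "{0..x} \<subseteq> {0..1}" by simp
  have "integral {0..x} (\<lambda>x. a x + c * b x) = integral {0..x} a + c * integral {0..x} b"
    using integrable_on_subinterval[OF L2_integrable_on[OF a] sub]
      integrable_on_subinterval[OF L2_integrable_on[OF b] sub]
    by (simp add: integral_add integrable_on_mult_right)
  then show "f x + c * g x = f 0 + c * g 0 + integral {0..x} (\<lambda>x. a x + c * b x)"
    using W21_eq_integral[OF assms(1) x] W21_eq_integral[OF assms(2) x]
    by (simp add: algebra_simps)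
qed

lemma W21_power:
  "W21 (\<lambda>x. complex_of_real (x ^ n)) (\<lambda>x. complex_of_real (real n * x ^ (n - 1)))"
  unfolding W21_iff_integral
proof (intro conjI ballI)
  show "L2 (\<lambda>x. complex_of_real (real n * x ^ (n - 1)))"
    by (intro L2_continuous_on continuous_intros)
  fix x :: real assume "x \<in> {0..1}"
  then have "((\<lambda>t. complex_of_real (real n * t ^ (n - 1))) has_integral
              complex_of_real (x ^ n) - complex_of_real (0 ^ n)) {0..x}"
    by (intro fundamental_theorem_of_calculus has_vector_derivative_of_real)
      (auto intro!: derivative_eq_intros)
  then show "complex_of_real (x ^ n)
      = complex_of_real (0 ^ n) + integral {0..x} (\<lambda>t. complex_of_real (real n * t ^ (n - 1)))"
    by (simp only: integral_unique) simp
qed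

section \<open>Density of the domain\<close>

lemma L2_approx_by_bounded:
  assumes "L2 f" and "e > 0"
  obtains g C where "g \<in> borel_measurable lborel" and "\<And>x. cmod (g x) \<le> C"
    and "\<And>x. x \<notin> {0..1} \<Longrightarrow> g x = 0" and "L2_sqdist f g < e"
proof -
  define g where "g n x = (if cmod (zero_ext f x) \<le> real n then zero_ext f x else 0)"
    for n :: nat and x
  have [measurable]: "zero_ext f \<in> borel_measurable lborel"
    using assms(1) unfolding L2_def zero_ext_def by simp
  have g_meas [measurable]: "g n \<in> borel_measurable lborel" for n
    unfolding g_def by measurable
  have g_bounded: "cmod (g n x) \<le> real n" for n x
    by (simp add: g_def)
  have g_vanishes: "g n x = 0" if "x \<notin> {0..1}" for n x
    using that by (simp add: g_def zero_ext_def)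
  have "L2 (g n)" for n
    by (rule L2_bounded[OF g_meas g_bounded])
  moreover have "AE x in lborel_01. (\<lambda>n. g n x) \<longlonglongrightarrow> f x"
  proof (intro AE_I2 tendsto_eventually)
    fix x assume "x \<in> space lborel_01"
    then have "zero_ext f x = f x" by (simp add: zero_ext_def space_restrict_space)
    moreover obtain n0 where "cmod (zero_ext f x) \<le> real n0" using real_arch_simple by blast
    ultimately show "\<forall>\<^sub>F n in sequentially. g n x = f x"
      unfolding g_def eventually_sequentially by (metis of_nat_mono order_trans)
  qed
  moreover have "AE x in lborel_01. (cmod (f x - g n x))^2 \<le> (cmod (f x))^2" for n
    by (intro AE_I2) (auto simp: g_def zero_ext_def space_restrict_space)
  moreover have "integrable lborel_01 (\<lambda>x. (cmod (f x))^2)"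
    using assms(1) unfolding L2_iff by blast
  ultimately have "(\<lambda>n. L2_sqdist f (g n)) \<longlonglongrightarrow> 0"
    by (intro L2_sqdist_tendsto_0[OF assms(1)])
  then have "eventually (\<lambda>n. L2_sqdist f (g n) < e) sequentially"
    using assms(2) by (rule order_tendstoD)
  then obtain n where "L2_sqdist f (g n) < e"
    using eventually_happens'[OF sequentially_bot] by blast
  with that g_meas g_bounded g_vanishes show ?thesis by blast
qed

definition steklov :: "(real \<Rightarrow> 'a::banach) \<Rightarrow> real \<Rightarrow> real \<Rightarrow> 'a" where
  "steklov g h x = integral {x..x+h} g /\<^sub>R h"

context
  fixes g :: "real \<Rightarrow> complex" and C :: real
  assumes g_measurable [measurable]: "g \<in> borel_measurable lborel"
    and g_bounded: "\<And>x. cmod (g x) \<le> C"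
    and g_vanishes: "\<And>x. x \<notin> {0..1} \<Longrightarrow> g x = 0"
begin

lemma bounded_integrable_on: "g integrable_on {a..b}"
proof -
  have "set_integrable lborel {0..1::real} (\<lambda>_. C)"
    by (intro borel_integrable_atLeastAtMost' continuous_on_const)
  then have majorant: "integrable lborel (\<lambda>x::real. indicator {0..1} x *\<^sub>R C)"
    unfolding set_integrable_def .
  have "norm (g x) \<le> norm (indicator {0..1::real} x *\<^sub>R C)" for x
    using g_bounded[of x] g_vanishes[of x] by (cases "x \<in> {0..1}") auto
  then have "integrable lborel g"
    by (rule Bochner_Integration.integrable_bound[OF majorant g_measurable AE_I2])
  then show ?thesis
    using integrable_on_subcbox[OF integrable_on_lborel, of g a b] by simp
qed

lemma steklov_bounded:
  assumes "h > 0"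
  shows "cmod (steklov g h x) \<le> C"
proof -
  have "norm (integral (cbox x (x + h)) g) \<le> C * measure lborel (cbox x (x + h))"
    using order_trans[OF norm_ge_zero g_bounded] bounded_integrable_on g_bounded
    by (intro integrable_bound) auto
  then show ?thesis using assms unfolding steklov_def by (simp add: field_simps)
qed

lemma W21_steklov:
  assumes h: "h > 0"
  shows "W21 (steklov g h) (\<lambda>t. (g (t + h) - g t) /\<^sub>R h)"
  unfolding W21_iff_integral
proof (intro conjI ballI)
  have "(\<lambda>t. (g (t + h) - g t) /\<^sub>R h) \<in> borel_measurable lborel"
    by measurable
  moreover have "cmod ((g (t + h) - g t) /\<^sub>R h) \<le> 2 * C / h" for t
  proof -
    have "cmod ((g (t + h) - g t) /\<^sub>R h) = inverse h * cmod (g (t + h) - g t)"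
      using h by (simp only: norm_scaleR abs_inverse abs_of_pos)
    also have "\<dots> \<le> inverse h * (2 * C)"
      using norm_triangle_ineq4[of "g (t + h)" "g t"] g_bounded[of t] g_bounded[of "t + h"] h
      by (intro mult_left_mono) auto
    finally show ?thesis by (simp add: field_simps)
  qed
  ultimately show "L2 (\<lambda>t. (g (t + h) - g t) /\<^sub>R h)"
    by (rule L2_bounded)
  fix x :: real assume x: "x \<in> {0..1}"
  have shift: "(\<lambda>t. g (t + h)) = g \<circ> (+) h"
    by (simp add: fun_eq_iff add.commute)
  have shifted: "(\<lambda>t. g (t + h)) integrable_on {0..x}"
    unfolding shift integrable_on_shift_Icc_real by (rule bounded_integrable_on)
  have "integral {0..x} (\<lambda>t. (g (t + h) - g t) /\<^sub>R h)
          = (integral {0..x} (\<lambda>t. g (t + h)) - integral {0..x} g) /\<^sub>R h"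
    unfolding integral_cmul integral_diff[OF shifted bounded_integrable_on] ..
  also have "integral {0..x} (\<lambda>t. g (t + h)) = integral {h..x+h} g"
    unfolding shift integral_shift_Icc_real by simp
  also have "integral {h..x+h} g - integral {0..x} g = integral {x..x+h} g - integral {0..h} g"
  proof -
    have "integral {0..x} g + integral {x..x+h} g = integral {0..x+h} g"
      "integral {0..h} g + integral {h..x+h} g = integral {0..x+h} g"
      by (rule Henstock_Kurzweil_Integration.integral_combine[OF _ _ bounded_integrable_on];
          use x h in auto)+
    then show ?thesis by (simp add: algebra_simps)
  qed
  finally show "steklov g h x = steklov g h 0 + integral {0..x} (\<lambda>t. (g (t + h) - g t) /\<^sub>R h)"
    unfolding steklov_def by (simp add: scaleR_diff_right)
qed

lemma steklov_tendsto: "AE x in lborel. ((\<lambda>h. steklov g h x) \<longlongrightarrow> g x) (at_right 0)"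
proof -
  obtain N where N: "negligible N"
    and diff: "\<And>x e. \<lbrakk>x \<notin> N; 0 < e\<rbrakk> \<Longrightarrow> \<exists>d>0. \<forall>h. 0 < h \<and> h < d \<longrightarrow>
        norm (integral (cbox x (x + h *\<^sub>R One)) g /\<^sub>R h ^ DIM(real) - g x) < e"
    using integrable_ccontinuous_explicit[of g] bounded_integrable_on by auto
  have "AE x in lebesgue. x \<notin> N"
    using N by (intro AE_not_in) (simp add: negligible_iff_null_sets)
  then have "AE x in lborel. x \<notin> N"
    by (simp add: AE_completion_iff)
  then show ?thesis
  proof eventually_elim
    case (elim x)
    show ?case
      unfolding tendsto_iff dist_norm eventually_at_right_field
    proof (intro allI impI)
      fix e :: real assume "e > 0"
      with diff[OF elim] obtain d where "d > 0"
        and "\<forall>h. 0 < h \<and> h < d \<longrightarrow> cmod (integral {x..x + h} g /\<^sub>R h - g x) < e"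
        by auto
      then show "\<exists>b>0. \<forall>h>0. h < b \<longrightarrow> cmod (steklov g h x - g x) < e"
        unfolding steklov_def by blast
    qed
  qed
qed

lemma W21_approx_bounded:
  assumes "e > 0"
  shows "\<exists>psi dpsi. W21 psi dpsi \<and> L2_sqdist g psi < e"
proof -
  interpret finite_measure lborel_01 by (rule finite_measure_lborel_01)
  define h :: "nat \<Rightarrow> real" where "h k = inverse (real (Suc k))" for k
  have h_pos: "h k > 0" for k by (simp add: h_def)
  have h_lim: "filterlim h (at_right 0) sequentially"
    unfolding h_def by (intro tendsto_imp_filterlim_at_right LIMSEQ_inverse_real_of_nat) simp
  have "AE x in lborel. (\<lambda>k. steklov g (h k) x) \<longlonglongrightarrow> g x"
    using steklov_tendsto
  proof eventually_elim
    case (elim x)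
    show ?case by (rule filterlim_compose[OF elim h_lim])
  qed
  then have "AE x in lborel. x \<in> {0..1} \<longrightarrow> (\<lambda>k. steklov g (h k) x) \<longlonglongrightarrow> g x"
    by eventually_elim simp
  then have lim: "AE x in lborel_01. (\<lambda>k. steklov g (h k) x) \<longlonglongrightarrow> g x"
    by (simp add: AE_restrict_space_iff)
  have bound: "AE x in lborel_01. (cmod (g x - steklov g (h k) x))^2 \<le> (2 * C)^2" for k
  proof (intro AE_I2 power_mono)
    fix x
    show "cmod (g x - steklov g (h k) x) \<le> 2 * C"
      using norm_triangle_ineq4[of "g x" "steklov g (h k) x"] g_bounded[of x]
        steklov_bounded[OF h_pos, of k x] by simp
  qed simp
  have "L2 g"
    using g_measurable g_bounded by (rule L2_bounded)
  from L2_sqdist_tendsto_0[OF this W21_L2[OF W21_steklov[OF h_pos]] integrable_const lim bound]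
  have "(\<lambda>k. L2_sqdist g (steklov g (h k))) \<longlonglongrightarrow> 0" .
  then have "eventually (\<lambda>k. L2_sqdist g (steklov g (h k)) < e) sequentially"
    using assms by (rule order_tendstoD)
  then obtain k where "L2_sqdist g (steklov g (h k)) < e"
    using eventually_happens'[OF sequentially_bot] by blast
  with W21_steklov[OF h_pos] show ?thesis by blast
qed

end

lemma W21_dense:
  assumes "L2 f" and "e > 0"
  shows "\<exists>psi dpsi. W21 psi dpsi \<and> L2_sqdist f psi < e"
proof -
  have e4: "e / 4 > 0" using assms(2) by simp
  obtain g C where g: "g \<in> borel_measurable lborel" "\<And>x. cmod (g x) \<le> C"
      "\<And>x. x \<notin> {0..1} \<Longrightarrow> g x = 0" and fg: "L2_sqdist f g < e / 4"
    using L2_approx_by_bounded[OF assms(1) e4] by blast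
  obtain psi dpsi where psi: "W21 psi dpsi" and gpsi: "L2_sqdist g psi < e / 4"
    using W21_approx_bounded[OF g e4] by blast
  have "L2 g"
    using g(1,2) by (rule L2_bounded)
  then have "L2_sqdist f psi \<le> 2 * L2_sqdist f g + 2 * L2_sqdist g psi"
    by (rule L2_sqdist_triangle[OF assms(1) _ W21_L2[OF psi]])
  with fg gpsi have "L2_sqdist f psi < e" by linarith
  with psi show ?thesis by blast
qed

lemma AE_power_tendsto_0: "AE x in lborel_01. (\<lambda>n. x ^ n) \<longlonglongrightarrow> 0"
proof -
  have "AE x in lborel. (x::real) \<in> {0..1} \<longrightarrow> (\<lambda>n. x ^ n) \<longlonglongrightarrow> 0"
    using AE_lborel_singleton[of 1]
  proof eventually_elim
    case (elim x)
    show ?case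
    proof
      assume "x \<in> {0..1}"
      with elim have "norm x < 1" by (simp add: abs_if)
      then show "(\<lambda>n. x ^ n) \<longlonglongrightarrow> 0" by (rule LIMSEQ_power_zero)
    qed
  qed
  then show ?thesis by (simp add: AE_restrict_space_iff)
qed

lemma ip_power_tendsto_0:
  assumes "L2 v"
  shows "(\<lambda>n. ip (\<lambda>x. complex_of_real (x ^ n)) v) \<longlonglongrightarrow> 0"
proof -
  have "(\<lambda>n. integral\<^sup>L lborel_01 (\<lambda>x. complex_of_real (x ^ n) * cnj (v x)))
          \<longlonglongrightarrow> integral\<^sup>L lborel_01 (\<lambda>x. 0)"
  proof (rule integral_dominated_convergence)
    show "(\<lambda>x. complex_of_real (x ^ n) * cnj (v x)) \<in> borel_measurable lborel_01" for n
      using L2_integrable_mult_cnj[OF W21_L2[OF W21_power] assms] by (rule borel_measurable_integrable)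
    show "integrable lborel_01 (\<lambda>x. cmod (v x))"
      using L2_integrable[OF assms] by (rule integrable_norm)
    show "AE x in lborel_01. (\<lambda>n. complex_of_real (x ^ n) * cnj (v x)) \<longlonglongrightarrow> 0"
      using AE_power_tendsto_0
    proof eventually_elim
      case (elim x)
      have "(\<lambda>n. complex_of_real (x ^ n) * cnj (v x)) \<longlonglongrightarrow> complex_of_real 0 * cnj (v x)"
        by (intro tendsto_intros elim)
      then show ?case by simp
    qed
    show "AE x in lborel_01. norm (complex_of_real (x ^ n) * cnj (v x)) \<le> cmod (v x)" for n
    proof (intro AE_I2)
      fix x assume "x \<in> space lborel_01"
      then have "\<bar>x\<bar> ^ n \<le> 1"
        by (intro power_le_one) (auto simp: space_restrict_space)
      then show "norm (complex_of_real (x ^ n) * cnj (v x)) \<le> cmod (v x)"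
        by (simp add: norm_mult norm_power mult_left_le_one_le)
    qed
  qed simp_all
  then show ?thesis by (simp add: ip_eq_integral)
qed

lemma L2_sqdist_power_tendsto_0:
  "(\<lambda>n. L2_sqdist (\<lambda>x. 0) (\<lambda>x. complex_of_real (x ^ n))) \<longlonglongrightarrow> 0"
proof (rule L2_sqdist_tendsto_0)
  show "L2 (\<lambda>x. 0)"
    by (intro L2_continuous_on continuous_intros)
  show "L2 (\<lambda>x. complex_of_real (x ^ n))" for n
    by (rule W21_L2[OF W21_power])
  show "integrable lborel_01 (\<lambda>x. 1)"
    using finite_measure.integrable_const[OF finite_measure_lborel_01] .
  show "AE x in lborel_01. (\<lambda>n. complex_of_real (x ^ n)) \<longlonglongrightarrow> 0"
    using AE_power_tendsto_0
  proof eventually_elim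
    case (elim x)
    show ?case using tendsto_of_real[OF elim, where 'a = complex] by simp
  qed
  show "AE x in lborel_01. (cmod (0 - complex_of_real (x ^ n)))^2 \<le> 1" for n
  proof (intro AE_I2)
    fix x assume "x \<in> space lborel_01"
    then have "(\<bar>x\<bar> ^ n)^2 \<le> 1"
      by (intro power_le_one) (auto simp: space_restrict_space)
    then show "(cmod (0 - complex_of_real (x ^ n)))^2 \<le> 1"
      by (simp add: norm_power)
  qed
qed

definition boundary_defect ::
    "(real \<Rightarrow> complex) \<Rightarrow> (real \<Rightarrow> complex) \<Rightarrow> real \<Rightarrow> (real \<Rightarrow> complex) \<Rightarrow> complex" where
  "boundary_defect v1 v2 \<alpha> psi =
     psi 1 + \<i> * ip psi v2 - exp (\<i> * complex_of_real \<alpha>) * (psi 0 - \<i> * ip psi v1)"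

lemma domA_iff_boundary_defect:
  "domA v1 v2 \<alpha> psi dpsi \<longleftrightarrow> W21 psi dpsi \<and> boundary_defect v1 v2 \<alpha> psi = 0"
  unfolding domA_def boundary_defect_def by simp

lemma boundary_defect_add_scaled:
  assumes "L2 v1" and "L2 v2" and "L2 psi" and "L2 k"
  shows "boundary_defect v1 v2 \<alpha> (\<lambda>x. psi x + c * k x)
           = boundary_defect v1 v2 \<alpha> psi + c * boundary_defect v1 v2 \<alpha> k"
proof -
  have "ip (\<lambda>x. psi x + c * k x) v = ip psi v + c * ip k v" if "L2 v" for v
    using ip_add_left[OF assms(3) L2_mult[OF assms(4)] that] by (simp add: ip_mult_left)
  then show ?thesis
    unfolding boundary_defect_def using assms(1,2) by (simp add: algebra_simps)
qed

lemma boundary_defect_power_tendsto_1: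
  assumes "L2 v1" and "L2 v2"
  shows "(\<lambda>n. boundary_defect v1 v2 \<alpha> (\<lambda>x. complex_of_real (x ^ Suc n))) \<longlonglongrightarrow> 1"
proof -
  let ?E = "exp (\<i> * complex_of_real \<alpha>)"
  have "(\<lambda>n. 1 + \<i> * ip (\<lambda>x. complex_of_real (x ^ Suc n)) v2
                + ?E * (\<i> * ip (\<lambda>x. complex_of_real (x ^ Suc n)) v1))
          \<longlonglongrightarrow> 1 + \<i> * 0 + ?E * (\<i> * 0)"
    using ip_power_tendsto_0[OF assms(1), THEN LIMSEQ_Suc]
      ip_power_tendsto_0[OF assms(2), THEN LIMSEQ_Suc]
    by (intro tendsto_intros)
  then show ?thesis
    by (simp add: boundary_defect_def)
qed

lemma domA_dense_in_W21:
  assumes "L2 v1" and "L2 v2" and "W21 psi dpsi" and "e > 0"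
  shows "\<exists>phi dphi. domA v1 v2 \<alpha> phi dphi \<and> L2_sqdist psi phi < e"
proof -
  define k where "k n x = complex_of_real (x ^ Suc n)" for n x
  define B where "B n = boundary_defect v1 v2 \<alpha> (k n)" for n
  define c where "c n = - boundary_defect v1 v2 \<alpha> psi / B n" for n
  define phi where "phi n x = psi x + c n * k n x" for n x
  have W21_k: "W21 (k n) (\<lambda>x. complex_of_real (real (Suc n) * x ^ n))" for n
    using W21_power[of "Suc n"] unfolding k_def by simp
  have L2_psi: "L2 psi" by (rule W21_L2[OF assms(3)])
  have B_lim: "B \<longlonglongrightarrow> 1"
    unfolding B_def k_def by (rule boundary_defect_power_tendsto_1[OF assms(1,2)])
  have "L2_sqdist psi (phi n) = (cmod (c n))^2 * L2_sqdist (\<lambda>x. 0) (k n)" for n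
    unfolding L2_sqdist_eq_integral phi_def by (simp add: norm_mult power_mult_distrib)
  moreover have "(\<lambda>n. (cmod (c n))^2 * L2_sqdist (\<lambda>x. 0) (k n))
                   \<longlonglongrightarrow> (cmod (- boundary_defect v1 v2 \<alpha> psi / 1))^2 * 0"
    unfolding c_def k_def using B_lim L2_sqdist_power_tendsto_0[THEN LIMSEQ_Suc]
    by (intro tendsto_intros) simp_all
  ultimately have "(\<lambda>n. L2_sqdist psi (phi n)) \<longlonglongrightarrow> 0"
    by simp
  then have "eventually (\<lambda>n. L2_sqdist psi (phi n) < e) sequentially"
    using assms(4) by (rule order_tendstoD)
  moreover have "eventually (\<lambda>n. B n \<noteq> 0) sequentially"
    using B_lim by (rule tendsto_imp_eventually_ne) simp
  ultimately have "eventually (\<lambda>n. L2_sqdist psi (phi n) < e \<and> B n \<noteq> 0) sequentially"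
    by (rule eventually_conj)
  then obtain n where n: "L2_sqdist psi (phi n) < e" and "B n \<noteq> 0"
    using eventually_happens'[OF sequentially_bot] by blast
  have "boundary_defect v1 v2 \<alpha> (phi n) = boundary_defect v1 v2 \<alpha> psi + c n * B n"
    unfolding phi_def B_def by (rule boundary_defect_add_scaled[OF assms(1,2) L2_psi W21_L2[OF W21_k]])
  also have "\<dots> = 0"
    using \<open>B n \<noteq> 0\<close> by (simp add: c_def)
  finally have "boundary_defect v1 v2 \<alpha> (phi n) = 0" .
  moreover have "W21 (phi n) (\<lambda>x. dpsi x + c n * complex_of_real (real (Suc n) * x ^ n))"
    unfolding phi_def by (rule W21_add_scaled[OF assms(3) W21_k])
  ultimately show ?thesis
    using n unfolding domA_iff_boundary_defect by blast
qed

lemma domA_dense: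
  assumes "L2 v1" and "L2 v2" and "L2 f" and "e > 0"
  shows "\<exists>phi dphi. domA v1 v2 \<alpha> phi dphi \<and> L2_sqdist f phi < e"
proof -
  have e4: "e / 4 > 0" using assms(4) by simp
  obtain psi dpsi where psi: "W21 psi dpsi" and f_psi: "L2_sqdist f psi < e / 4"
    using W21_dense[OF assms(3) e4] by blast
  obtain phi dphi where phi: "domA v1 v2 \<alpha> phi dphi" and psi_phi: "L2_sqdist psi phi < e / 4"
    using domA_dense_in_W21[OF assms(1,2) psi e4] by blast
  have "L2 phi"
    using phi unfolding domA_def by (blast intro: W21_L2)
  then have "L2_sqdist f phi \<le> 2 * L2_sqdist f psi + 2 * L2_sqdist psi phi"
    by (rule L2_sqdist_triangle[OF assms(3) W21_L2[OF psi]])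
  with f_psi psi_phi have "L2_sqdist f phi < e" by linarith
  with phi show ?thesis by blast
qed

section \<open>Symmetry\<close>

lemma lborel_pair_integrable_mult:
  fixes A B :: "real \<Rightarrow> complex"
  assumes A: "integrable lborel A" and B: "integrable lborel B"
  shows "integrable (lborel \<Otimes>\<^sub>M lborel) (\<lambda>p. A (fst p) * B (snd p))"
proof (rule lborel_pair.Fubini_integrable)
  have [measurable]: "A \<in> borel_measurable lborel" "B \<in> borel_measurable lborel"
    using A B by auto
  show "(\<lambda>p. A (fst p) * B (snd p)) \<in> borel_measurable (lborel \<Otimes>\<^sub>M lborel)"
    by measurable
  show "integrable lborel (\<lambda>x. \<integral>t. norm (A (fst (x, t)) * B (snd (x, t))) \<partial>lborel)"
    unfolding norm_mult using A by simp
  show "AE x in lborel. integrable lborel (\<lambda>t. A (fst (x, t)) * B (snd (x, t)))"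
    using B by simp
qed

lemma lborel_pair_triangle_sets:
  "{p :: real \<times> real. snd p \<le> fst p} \<in> sets (lborel \<Otimes>\<^sub>M lborel)"
  "{p :: real \<times> real. fst p < snd p} \<in> sets (lborel \<Otimes>\<^sub>M lborel)"
proof -
  have "closed {p :: real \<times> real. snd p \<le> fst p}" "open {p :: real \<times> real. fst p < snd p}"
    by (intro closed_Collect_le open_Collect_less continuous_on_fst continuous_on_snd continuous_on_id)+
  then show "{p :: real \<times> real. snd p \<le> fst p} \<in> sets (lborel \<Otimes>\<^sub>M lborel)"
    "{p :: real \<times> real. fst p < snd p} \<in> sets (lborel \<Otimes>\<^sub>M lborel)"
    unfolding lborel_prod by simp_all
qed

lemma lborel_integral_mult_split_diagonal:
  fixes A B :: "real \<Rightarrow> complex"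
  assumes A: "integrable lborel A" and B: "integrable lborel B"
  shows "(\<integral>x. A x * (LINT t:{..x}|lborel. B t) \<partial>lborel)
           + (\<integral>t. (LINT x:{..<t}|lborel. A x) * B t \<partial>lborel)
         = integral\<^sup>L lborel A * integral\<^sup>L lborel B"
proof -
  define G where "G p = A (fst p) * B (snd p)" for p :: "real \<times> real"
  define L where "L = {p :: real \<times> real. snd p \<le> fst p}"
  define U where "U = {p :: real \<times> real. fst p < snd p}"
  have G_int: "integrable (lborel \<Otimes>\<^sub>M lborel) G"
    unfolding G_def using A B by (rule lborel_pair_integrable_mult)
  have L_int: "integrable (lborel \<Otimes>\<^sub>M lborel) (\<lambda>p. indicator L p *\<^sub>R G p)"
    and U_int: "integrable (lborel \<Otimes>\<^sub>M lborel) (\<lambda>p. indicator U p *\<^sub>R G p)"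
    unfolding L_def U_def using lborel_pair_triangle_sets G_int by (auto intro: integrable_mult_indicator)
  have "(\<lambda>t. indicator L (x, t) *\<^sub>R G (x, t)) = (\<lambda>t. A x * (indicator {..x} t *\<^sub>R B t))" for x
    by (auto simp: L_def G_def indicator_def fun_eq_iff)
  then have "(\<integral>x. A x * (LINT t:{..x}|lborel. B t) \<partial>lborel)
               = (\<integral>x. \<integral>t. indicator L (x, t) *\<^sub>R G (x, t) \<partial>lborel \<partial>lborel)"
    unfolding set_lebesgue_integral_def by (simp only: integral_mult_right_zero)
  also have "\<dots> = integral\<^sup>L (lborel \<Otimes>\<^sub>M lborel) (\<lambda>p. indicator L p *\<^sub>R G p)"
    using lborel_pair.integral_fst'[OF L_int] by simp
  finally have lower: "(\<integral>x. A x * (LINT t:{..x}|lborel. B t) \<partial>lborel)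
                         = integral\<^sup>L (lborel \<Otimes>\<^sub>M lborel) (\<lambda>p. indicator L p *\<^sub>R G p)" .
  have "(\<lambda>x. indicator U (x, t) *\<^sub>R G (x, t)) = (\<lambda>x. (indicator {..<t} x *\<^sub>R A x) * B t)" for t
    by (auto simp: U_def G_def indicator_def fun_eq_iff)
  then have "(\<integral>t. (LINT x:{..<t}|lborel. A x) * B t \<partial>lborel)
               = (\<integral>t. \<integral>x. indicator U (x, t) *\<^sub>R G (x, t) \<partial>lborel \<partial>lborel)"
    unfolding set_lebesgue_integral_def by (simp only: integral_mult_left_zero)
  also have "\<dots> = integral\<^sup>L (lborel \<Otimes>\<^sub>M lborel) (\<lambda>p. indicator U p *\<^sub>R G p)"
    using lborel_pair.integral_snd[of "\<lambda>x t. indicator U (x, t) *\<^sub>R G (x, t)"] U_int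
    by (simp add: case_prod_beta')
  finally have upper: "(\<integral>t. (LINT x:{..<t}|lborel. A x) * B t \<partial>lborel)
                         = integral\<^sup>L (lborel \<Otimes>\<^sub>M lborel) (\<lambda>p. indicator U p *\<^sub>R G p)" .
  have "(\<lambda>p. indicator L p *\<^sub>R G p + indicator U p *\<^sub>R G p) = G"
    by (auto simp: L_def U_def indicator_def fun_eq_iff)
  then have "integral\<^sup>L (lborel \<Otimes>\<^sub>M lborel) (\<lambda>p. indicator L p *\<^sub>R G p)
               + integral\<^sup>L (lborel \<Otimes>\<^sub>M lborel) (\<lambda>p. indicator U p *\<^sub>R G p)
             = integral\<^sup>L (lborel \<Otimes>\<^sub>M lborel) G"
    using L_int U_int by (simp flip: Bochner_Integration.integral_add)
  also have "\<dots> = integral\<^sup>L lborel A * integral\<^sup>L lborel B"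
    using lborel_pair.integral_fst'[OF G_int] by (simp add: G_def)
  finally show ?thesis unfolding lower upper .
qed

lemma set_integral_lessThan_eq_atMost:
  fixes f :: "real \<Rightarrow> 'a::{banach, second_countable_topology}"
  assumes "f \<in> borel_measurable lborel"
  shows "(LINT t:{..<x}|lborel. f t) = (LINT t:{..x}|lborel. f t)"
  unfolding set_lebesgue_integral_def
proof (rule integral_cong_AE)
  show "AE t in lborel. indicator {..<x} t *\<^sub>R f t = indicator {..x} t *\<^sub>R f t"
    using AE_lborel_singleton[of x] by eventually_elim (simp add: indicator_def)
qed (use assms in simp_all)

lemma W21_eq_set_integral_atMost:
  assumes "W21 psi a" and "x \<in> {0..1}"
  shows "psi x = psi 0 + (LINT t:{..x}|lborel. zero_ext a t)"
proof -
  have "psi x = psi 0 + (LINT t:{0..x}|lborel. a t)"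
    using assms unfolding W21_def by blast
  also have "(LINT t:{0..x}|lborel. a t) = (LINT t:{..x}|lborel. zero_ext a t)"
    unfolding set_lebesgue_integral_def zero_ext_def using assms(2)
    by (intro Bochner_Integration.integral_cong) (auto simp: indicator_def)
  finally show ?thesis .
qed

lemma W21_eq_set_integral_lessThan:
  assumes "W21 psi a" and "x \<in> {0..1}"
  shows "psi x = psi 0 + (LINT t:{..<x}|lborel. zero_ext a t)"
proof -
  have "integrable lborel (zero_ext a)"
    using L2_integrable[OF W21_L2_deriv[OF assms(1)]] unfolding integrable_lborel_01_iff .
  then have meas: "zero_ext a \<in> borel_measurable lborel" by (rule borel_measurable_integrable)
  show ?thesis
    unfolding set_integral_lessThan_eq_atMost[OF meas] by (rule W21_eq_set_integral_atMost[OF assms])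
qed

lemma W21_endpoint_eq:
  assumes "W21 psi a"
  shows "psi 1 = psi 0 + integral\<^sup>L lborel (zero_ext a)"
proof -
  have "1 \<in> {0..1::real}" by simp
  with assms have "psi 1 = psi 0 + (LINT t:{0..1}|lborel. a t)"
    unfolding W21_def by blast
  then show ?thesis unfolding set_integral_01 integral_lborel_01 .
qed

lemma ip_W21_right_split:
  assumes "L2 a" and phi: "W21 phi b"
  shows "(\<integral>x. zero_ext a x * (LINT t:{..x}|lborel. cnj (zero_ext b t)) \<partial>lborel)
           = ip a phi - integral\<^sup>L lborel (zero_ext a) * cnj (phi 0)"
proof -
  have "(\<integral>x. zero_ext a x * (LINT t:{..x}|lborel. cnj (zero_ext b t)) \<partial>lborel)
          = (\<integral>x. zero_ext (\<lambda>x. a x * cnj (phi x)) x - zero_ext a x * cnj (phi 0) \<partial>lborel)"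
  proof (rule Bochner_Integration.integral_cong)
    fix x :: real
    show "zero_ext a x * (LINT t:{..x}|lborel. cnj (zero_ext b t))
            = zero_ext (\<lambda>x. a x * cnj (phi x)) x - zero_ext a x * cnj (phi 0)"
    proof (cases "x \<in> {0..1}")
      case True
      have "cnj (phi x) = cnj (phi 0) + (LINT t:{..x}|lborel. cnj (zero_ext b t))"
        using W21_eq_set_integral_atMost[OF phi True]
        unfolding set_lebesgue_integral_def by (simp flip: Bochner_Integration.integral_cnj)
      then show ?thesis unfolding zero_ext_def by (simp add: algebra_simps)
    qed (simp add: zero_ext_def)
  qed simp
  also have "\<dots> = ip a phi - integral\<^sup>L lborel (zero_ext a) * cnj (phi 0)"
    using L2_integrable_mult_cnj[OF assms(1) W21_L2[OF phi]] L2_integrable[OF assms(1)]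
    unfolding integrable_lborel_01_iff ip_eq_integral integral_lborel_01 by simp
  finally show ?thesis .
qed

lemma ip_W21_left_split:
  assumes psi: "W21 psi a" and "L2 b"
  shows "(\<integral>t. (LINT x:{..<t}|lborel. zero_ext a x) * cnj (zero_ext b t) \<partial>lborel)
           = ip psi b - psi 0 * cnj (integral\<^sup>L lborel (zero_ext b))"
proof -
  have "(\<integral>t. (LINT x:{..<t}|lborel. zero_ext a x) * cnj (zero_ext b t) \<partial>lborel)
          = (\<integral>t. zero_ext (\<lambda>t. psi t * cnj (b t)) t - psi 0 * cnj (zero_ext b t) \<partial>lborel)"
  proof (rule Bochner_Integration.integral_cong)
    fix t :: real
    show "(LINT x:{..<t}|lborel. zero_ext a x) * cnj (zero_ext b t)
            = zero_ext (\<lambda>t. psi t * cnj (b t)) t - psi 0 * cnj (zero_ext b t)"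
    proof (cases "t \<in> {0..1}")
      case True
      show ?thesis
        unfolding zero_ext_def W21_eq_set_integral_lessThan[OF psi True] by (simp add: algebra_simps)
    qed (simp add: zero_ext_def)
  qed simp
  also have "\<dots> = ip psi b - psi 0 * cnj (integral\<^sup>L lborel (zero_ext b))"
    using L2_integrable_mult_cnj[OF W21_L2[OF psi] assms(2)] L2_integrable[OF assms(2)]
    unfolding integrable_lborel_01_iff ip_eq_integral integral_lborel_01 by simp
  finally show ?thesis .
qed

lemma W21_integration_by_parts:
  assumes psi: "W21 psi a" and phi: "W21 phi b"
  shows "ip a phi + ip psi b = psi 1 * cnj (phi 1) - psi 0 * cnj (phi 0)"
proof -
  have "integrable lborel (zero_ext a)" "integrable lborel (\<lambda>t. cnj (zero_ext b t))"
    using L2_integrable[OF W21_L2_deriv[OF psi]] L2_integrable[OF W21_L2_deriv[OF phi]]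
    unfolding integrable_lborel_01_iff by simp_all
  from lborel_integral_mult_split_diagonal[OF this]
  show ?thesis
    unfolding ip_W21_right_split[OF W21_L2_deriv[OF psi] phi] ip_W21_left_split[OF psi W21_L2_deriv[OF phi]]
      W21_endpoint_eq[OF psi] W21_endpoint_eq[OF phi]
    by (simp add: algebra_simps)
qed
lemma ip_opA:
  assumes "L2 v1" and "L2 v2" and "L2 dpsi" and "L2 phi"
  shows "ip (opA v1 v2 psi dpsi) phi = \<i> * ip dpsi phi
           + (psi 0 - \<i> / 2 * ip psi v1) * ip v1 phi + (psi 1 + \<i> / 2 * ip psi v2) * ip v2 phi"
proof -
  define c1 where "c1 = psi 0 - \<i> / 2 * ip psi v1"
  define c2 where "c2 = psi 1 + \<i> / 2 * ip psi v2"
  have "opA v1 v2 psi dpsi = (\<lambda>x. (\<i> * dpsi x + c1 * v1 x) + c2 * v2 x)"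
    unfolding opA_def c1_def c2_def by (simp add: fun_eq_iff algebra_simps)
  moreover have "L2 (\<lambda>x. \<i> * dpsi x + c1 * v1 x)"
    using assms by (intro L2_add L2_mult)
  ultimately show ?thesis
    unfolding c1_def[symmetric] c2_def[symmetric]
    using assms by (simp add: ip_add_left L2_mult ip_mult_left)
qed

lemma unitary_boundary_terms_cancel:
  fixes E P0 P1 p1 p2 F0 F1 q1 q2 :: complex
  assumes E: "E * cnj E = 1"
    and P: "P1 + \<i> * p2 = E * (P0 - \<i> * p1)" and F: "F1 + \<i> * q2 = E * (F0 - \<i> * q1)"
  shows "\<i> * (P1 * cnj F1 - P0 * cnj F0) + (P0 - \<i> / 2 * p1) * cnj q1 + (P1 + \<i> / 2 * p2) * cnj q2
         = cnj (F0 - \<i> / 2 * q1) * p1 + cnj (F1 + \<i> / 2 * q2) * p2"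
proof -
  have "\<i> * (P1 * cnj F1 - P0 * cnj F0) + (P0 - \<i> / 2 * p1) * cnj q1 + (P1 + \<i> / 2 * p2) * cnj q2
        - (cnj (F0 - \<i> / 2 * q1) * p1 + cnj (F1 + \<i> / 2 * q2) * p2)
        = \<i> * ((P1 + \<i> * p2) * cnj (F1 + \<i> * q2) - (P0 - \<i> * p1) * cnj (F0 - \<i> * q1))"
    by (simp add: algebra_simps)
  also have "\<dots> = \<i> * (E * cnj E - 1) * (P0 - \<i> * p1) * cnj (F0 - \<i> * q1)"
    unfolding P F by (simp add: algebra_simps)
  also have "\<dots> = 0"
    using E by simp
  finally show ?thesis by simp
qed

lemma opA_symmetric:
  assumes "L2 v1" and "L2 v2"
    and psi: "domA v1 v2 \<alpha> psi dpsi" and phi: "domA v1 v2 \<alpha> phi dphi"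
  shows "ip (opA v1 v2 psi dpsi) phi = ip psi (opA v1 v2 phi dphi)"
proof -
  define E where "E = exp (\<i> * complex_of_real \<alpha>)"
  have W_psi: "W21 psi dpsi" and W_phi: "W21 phi dphi"
    and bc_psi: "psi 1 + \<i> * ip psi v2 = E * (psi 0 - \<i> * ip psi v1)"
    and bc_phi: "phi 1 + \<i> * ip phi v2 = E * (phi 0 - \<i> * ip phi v1)"
    using psi phi unfolding domA_def E_def by blast+
  have "E * cnj E = 1"
    using complex_norm_square[of E] by (simp add: E_def)
  from unitary_boundary_terms_cancel[OF this bc_psi bc_phi]
  have boundary: "\<i> * (psi 1 * cnj (phi 1) - psi 0 * cnj (phi 0))
      + (psi 0 - \<i> / 2 * ip psi v1) * cnj (ip phi v1) + (psi 1 + \<i> / 2 * ip psi v2) * cnj (ip phi v2)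
    = cnj (phi 0 - \<i> / 2 * ip phi v1) * ip psi v1 + cnj (phi 1 + \<i> / 2 * ip phi v2) * ip psi v2" .
  have "ip (opA v1 v2 psi dpsi) phi = \<i> * (ip dpsi phi + ip psi dphi)
      + (psi 0 - \<i> / 2 * ip psi v1) * cnj (ip phi v1) + (psi 1 + \<i> / 2 * ip psi v2) * cnj (ip phi v2)
      - \<i> * ip psi dphi"
    unfolding ip_opA[OF assms(1,2) W21_L2_deriv[OF W_psi] W21_L2[OF W_phi]] by (simp add: algebra_simps)
  also have "\<dots> = cnj (phi 0 - \<i> / 2 * ip phi v1) * ip psi v1 + cnj (phi 1 + \<i> / 2 * ip phi v2) * ip psi v2
      - \<i> * ip psi dphi"
    unfolding W21_integration_by_parts[OF W_psi W_phi] boundary ..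
  also have "\<dots> = ip psi (opA v1 v2 phi dphi)"
    using ip_opA[OF assms(1,2) W21_L2_deriv[OF W_phi] W21_L2[OF W_psi], THEN arg_cong[of _ _ cnj]]
    by simp
  finally show ?thesis .
qed

theorem lemma5p2:
  fixes v1 v2 :: "real \<Rightarrow> complex" and \<alpha> :: real
  assumes "L2 v1" and "L2 v2" and "\<alpha> \<in> {0..<2*pi}"
  shows "(\<forall>f. L2 f \<longrightarrow> (\<forall>e>0. \<exists>psi dpsi. domA v1 v2 \<alpha> psi dpsi \<and>
              (LINT x:{0..1}|lborel. (cmod (f x - psi x))^2) < e))
       \<and> (\<forall>psi dpsi phi dphi. domA v1 v2 \<alpha> psi dpsi \<and> domA v1 v2 \<alpha> phi dphi \<longrightarrow>
              ip (opA v1 v2 psi dpsi) phi = ip psi (opA v1 v2 phi dphi))"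
  using domA_dense[OF assms(1,2)] opA_symmetric[OF assms(1,2)]
  unfolding L2_sqdist_def by blast

end
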